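(* Let $X$ be a pure finite $n$-dimensional simplicial complex. Define $M_{-1}=1$ and, for $0\le k\le n-1$, $M_k=\operatorname{Fill}_k((k+1)M_{k-1}+1)$. Let $0\le k\le n-1$. If $\operatorname{Sys}_j(X)>(j+1)M_{j-1}+1$ for every $0\le j\le k$, then $\operatorname{Crad}_k(X)\le M_k$.
   Context: $X(-1)=\{\emptyset\}$. Over $\mathbb{F}_2$: $C_k(X)$ has basis $X(k)$ (chains identified with subsets, $|A|$ the size), $\partial_k\sigma=\sum_{\tau\subset\sigma,|\tau|=|\sigma|-1}\tau$ (so $\partial_0\{u\}=\emptyset$), $Z_k=\ker\partial_k$, $B_k=\operatorname{Im}\partial_{k+1}$. $\operatorname{Sys}_k(X)=\min\{|A|:A\in Z_k\setminus B_k\}$ ($\infty$ if $Z_k=B_k$). For $B\in B_k$, $\operatorname{Fill}_k(B)=\min\{|A|:A\in C_{k+1},\partial_{k+1}A=B\}$; for $B\in Z_k\setminus B_k$, $\operatorname{Fill}_k(B)=\infty$; $\operatorname{Fill}_k(M)=\max\{\operatorname{Fill}_k(B):B\in Z_k,|B|\le M\}$. Cone function: a $(-1)$-cone function with apex $v$ maps $\emptyset\mapsto\{v\}$; for $k\ge0$ a $k$-cone function with apex $v$ is a linear map $\operatorname{Cone}^v_k:\bigoplus_{j=-1}^kC_j\to\bigoplus_{j=-1}^kC_{j+1}$ (sending $C_j$ into $C_{j+1}$) restricting to a $(k-1)$-cone function with apex $v$ and satisfying $\partial_{k+1}\operatorname{Cone}^v_k(A)=A+\operatorname{Cone}^v_k(\partial_kA)$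 for $A\in C_k$. $\operatorname{Vol}(\operatorname{Cone}^v_k)=\max_{\tau\in X(k)}|\operatorname{Cone}^v_k(\tau)|$; $\operatorname{Crad}_k(X)$ is the minimal volume over all vertices $v$ and all $k$-cone functions with apex $v$ ($\infty$ if none exist). *)

theory Defs
  imports Main "HOL-Library.Extended_Nat"
begin

text \<open>A face of dimension k has k+1 vertices.
Chains over F_2 are sets of faces; addition is symmetric difference.\<close>

definition simplicial_complex :: "'a set set \<Rightarrow> bool" where
  "simplicial_complex X \<longleftrightarrow> {} \<in> X \<and> (\<forall>\<sigma>\<in>X. \<forall>\<tau>. \<tau> \<subseteq> \<sigma> \<longrightarrow> \<tau> \<in> X)"

definition pure_complex :: "'a set set \<Rightarrow> nat \<Rightarrow> bool" where
  "pure_complex X n \<longleftrightarrow> simplicial_complex X \<and> finite X \<and>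
     (\<forall>\<sigma>\<in>X. card \<sigma> \<le> n + 1) \<and>
     (\<forall>\<sigma>\<in>X. \<exists>\<tau>\<in>X. \<sigma> \<subseteq> \<tau> \<and> card \<tau> = n + 1)"

text \<open>Faces with exactly d vertices (so X(k) = faces_card X (k+1), X(-1) = faces_card X 0).\<close>
definition faces_card :: "'a set set \<Rightarrow> nat \<Rightarrow> 'a set set" where
  "faces_card X d = {\<sigma>\<in>X. card \<sigma> = d}"

text \<open>F_2-sum of the chains f \<sigma>, \<sigma> \<in> A.\<close>
definition sdsum :: "('b \<Rightarrow> 'a set set) \<Rightarrow> 'b set \<Rightarrow> 'a set set" where
  "sdsum f A = {\<tau>. odd (card {\<sigma>\<in>A. \<tau> \<in> f \<sigma>})}"

definition facets :: "'a set \<Rightarrow> 'a set set" where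
  "facets \<sigma> = (\<lambda>v. \<sigma> - {v}) ` \<sigma>"

definition bd :: "'a set set \<Rightarrow> 'a set set" where
  "bd A = sdsum facets A"

definition Zk :: "'a set set \<Rightarrow> nat \<Rightarrow> 'a set set set" where
  "Zk X k = {A. A \<subseteq> faces_card X (k+1) \<and> bd A = {}}"

definition Bk :: "'a set set \<Rightarrow> nat \<Rightarrow> 'a set set set" where
  "Bk X k = {bd A | A. A \<subseteq> faces_card X (k+2)}"

definition Sys :: "'a set set \<Rightarrow> nat \<Rightarrow> enat" where
  "Sys X k = (INF A \<in> Zk X k - Bk X k. enat (card A))"

text \<open>Filling size of a single cycle (\<infinity> if it is not a boundary).\<close>
definition FillB :: "'a set set \<Rightarrow> nat \<Rightarrow> 'a set set \<Rightarrow> enat" where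
  "FillB X k B = (INF A \<in> {A. A \<subseteq> faces_card X (k+2) \<and> bd A = B}. enat (card A))"

definition Fill :: "'a set set \<Rightarrow> nat \<Rightarrow> enat \<Rightarrow> enat" where
  "Fill X k M = (SUP B \<in> {B. B \<in> Zk X k \<and> enat (card B) \<le> M}. FillB X k B)"

text \<open>Mseq X 0 = M_{-1} = 1, Mseq X (Suc k) = M_k = Fill_k((k+1) M_{k-1} + 1).\<close>
fun Mseq :: "'a set set \<Rightarrow> nat \<Rightarrow> enat" where
  "Mseq X 0 = 1"
| "Mseq X (Suc k) = Fill X k (of_nat (k+1) * Mseq X k + 1)"

text \<open>A k-cone function with apex v, given by its values c \<sigma> on the basis faces
\<sigma> of dimension -1..k (extended linearly over F_2 via sdsum).\<close>
definition cone_function :: "'a set set \<Rightarrow> nat \<Rightarrow> 'a \<Rightarrow> ('a set \<Rightarrow> 'a set set) \<Rightarrow> bool" where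
  "cone_function X k v c \<longleftrightarrow>
     {v} \<in> X \<and> c {} = {{v}} \<and>
     (\<forall>d\<le>k+1. \<forall>\<sigma>\<in>faces_card X d. c \<sigma> \<subseteq> faces_card X (d+1)) \<and>
     (\<forall>j\<le>k. \<forall>A. A \<subseteq> faces_card X (j+1) \<longrightarrow> bd (sdsum c A) = A \<union> sdsum c (bd A) - A \<inter> sdsum c (bd A))"

definition Vol :: "'a set set \<Rightarrow> nat \<Rightarrow> ('a set \<Rightarrow> 'a set set) \<Rightarrow> enat" where
  "Vol X k c = (SUP \<tau> \<in> faces_card X (k+1). enat (card (c \<tau>)))"

definition Crad :: "'a set set \<Rightarrow> nat \<Rightarrow> enat" where
  "Crad X k = (INF p \<in> {(v, c). cone_function X k v c}. Vol X k (snd p))"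

end

theory Submission
  imports Defs
begin

text \<open>The cone function is built one dimension at a time, with apex any vertex v. Suppose c is
defined on all faces of dimension < j, satisfies the cone equation there, and has values with
at most M_{i} faces on i-faces. For a j-face s the chain z = s + c(\<partial>s) is a cycle, because
\<partial>c(\<partial>s) = \<partial>s + c(\<partial>\<partial>s) = \<partial>s, and it has at most (j+1)M_{j-1} + 1 faces. Since this is below
Sys_j, z is a boundary, hence has a filling with at most Fill_j((j+1)M_{j-1} + 1) = M_j faces;
any such filling is a valid value of the cone function at s.\<close>

lemma sdsum_empty [simp]: "sdsum f {} = {}"
  by (simp add: sdsum_def)

lemma sdsum_insert:
  assumes "finite A" "a \<notin> A"
  shows "sdsum f (insert a A) = sym_diff (f a) (sdsum f A)"
proof -
  have "{s\<in>insert a A. t \<in> f s} = (if t \<in> f a then insert a {s\<in>A. t \<in> f s} else {s\<in>A. t \<in> f s})"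
    for t
    by auto
  then show ?thesis
    using assms by (auto simp: sdsum_def)
qed

lemma sdsum_singleton [simp]: "sdsum f {a} = f a"
  using sdsum_insert[of "{}" a f] by simp

lemma sdsum_cong: "(\<And>s. s \<in> A \<Longrightarrow> f s = g s) \<Longrightarrow> sdsum f A = sdsum g A"
  unfolding sdsum_def by (metis (mono_tags, lifting) Collect_cong)

lemma sdsum_subset_UN: "sdsum f A \<subseteq> (\<Union>s\<in>A. f s)"
proof
  fix t
  assume "t \<in> sdsum f A"
  then have "odd (card {s\<in>A. t \<in> f s})"
    by (simp add: sdsum_def)
  then have "{s\<in>A. t \<in> f s} \<noteq> {}"
    by (metis card.empty even_zero)
  then show "t \<in> (\<Union>s\<in>A. f s)"
    by auto
qed

lemma finite_sdsum: "finite A \<Longrightarrow> (\<And>s. s \<in> A \<Longrightarrow> finite (f s)) \<Longrightarrow> finite (sdsum f A)"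
  by (meson finite_UN_I finite_subset sdsum_subset_UN)

lemma sdsum_singletons: "finite A \<Longrightarrow> sdsum (\<lambda>s. {s}) A = A"
  by (induction A rule: finite_induct) (auto simp: sdsum_insert)

lemma sdsum_sym_diff_fun:
  "finite A \<Longrightarrow> sdsum (\<lambda>s. sym_diff (f s) (g s)) A = sym_diff (sdsum f A) (sdsum g A)"
  by (induction A rule: finite_induct) (auto simp: sdsum_insert)

lemma sdsum_sym_diff:
  assumes "finite A" "finite B"
  shows "sdsum f (sym_diff A B) = sym_diff (sdsum f A) (sdsum f B)"
  using assms(1)
proof (induction A rule: finite_induct)
  case empty
  then show ?case by simp
next
  case (insert a A)
  have IH: "sdsum f (sym_diff A B) = sym_diff (sdsum f A) (sdsum f B)"
    by (rule insert.IH)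
  have ins: "sdsum f (insert a A) = sym_diff (f a) (sdsum f A)"
    using insert by (simp add: sdsum_insert)
  show ?case
  proof (cases "a \<in> B")
    case True
    then have "sym_diff A B = insert a (sym_diff (insert a A) B)" "a \<notin> sym_diff (insert a A) B"
      "finite (sym_diff (insert a A) B)"
      using insert assms by auto
    then have "sdsum f (sym_diff A B) = sym_diff (f a) (sdsum f (sym_diff (insert a A) B))"
      by (metis sdsum_insert)
    then show ?thesis
      unfolding IH ins by blast
  next
    case False
    then have "sym_diff (insert a A) B = insert a (sym_diff A B)" "a \<notin> sym_diff A B"
      "finite (sym_diff A B)"
      using insert assms by auto
    then have "sdsum f (sym_diff (insert a A) B) = sym_diff (f a) (sdsum f (sym_diff A B))"
      by (metis sdsum_insert)
    then show ?thesis
      unfolding IH ins by blast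
  qed
qed

lemma sdsum_sdsum:
  assumes "finite A" "\<And>s. s \<in> A \<Longrightarrow> finite (f s)"
  shows "sdsum g (sdsum f A) = sdsum (\<lambda>s. sdsum g (f s)) A"
  using assms
proof (induction A rule: finite_induct)
  case (insert a A)
  then have "finite (sdsum f A)"
    by (intro finite_sdsum) auto
  with insert show ?case
    by (simp add: sdsum_insert sdsum_sym_diff)
qed simp

lemma card_sdsum_le:
  assumes "finite A" "\<And>s. s \<in> A \<Longrightarrow> finite (f s)"
  shows "card (sdsum f A) \<le> (\<Sum>s\<in>A. card (f s))"
proof -
  have "card (sdsum f A) \<le> card (\<Union>s\<in>A. f s)"
    using assms sdsum_subset_UN[of f A] by (intro card_mono) auto
  also have "\<dots> \<le> (\<Sum>s\<in>A. card (f s))"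
    using assms(1) by (rule card_UN_le)
  finally show ?thesis .
qed

lemma bd_facets: "bd (facets s) = {}"
proof -
  have "even (card {t\<in>facets s. r \<in> facets t})" for r
  proof -
    define D where "D = {a\<in>s. r \<in> facets (s - {a})}"
    have "{t\<in>facets s. r \<in> facets t} = (\<lambda>a. s - {a}) ` D"
      by (auto simp: D_def facets_def)
    moreover have "inj_on (\<lambda>a. s - {a}) D"
      by (auto simp: inj_on_def D_def)
    ultimately have card_eq: "card {t\<in>facets s. r \<in> facets t} = card D"
      by (simp add: card_image)
    have "D = {} \<or> (\<exists>a b. a \<noteq> b \<and> D = {a, b})"
    proof (cases "D = {}")
      case False
      then obtain a where a: "a \<in> D"
        by blast
      then obtain b where b: "b \<in> s" "b \<noteq> a" "r = s - {a} - {b}"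
        by (auto simp: D_def facets_def)
      \<comment> \<open>r lies in exactly the two facets obtained by putting back a or b\<close>
      have "D = {a, b}"
        using a b by (auto simp: D_def facets_def)
      then show ?thesis
        using b by blast
    qed simp
    then show ?thesis
      using card_eq by auto
  qed
  then show ?thesis
    by (simp add: bd_def sdsum_def)
qed

lemma card_facets_le: "finite s \<Longrightarrow> card (facets s) \<le> card s"
  unfolding facets_def by (rule card_image_le)

lemma bd_sdsum_cone:
  assumes "finite F"
    and "\<And>t. t \<in> F \<Longrightarrow> finite t"
    and "\<And>t. t \<in> F \<Longrightarrow> finite (c t)"
    and cone_eq: "\<And>t. t \<in> F \<Longrightarrow> bd (c t) = sym_diff {t} (sdsum c (facets t))"
  shows "bd (sdsum c F) = sym_diff F (sdsum c (bd F))"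
proof -
  have "bd (sdsum c F) = sdsum (\<lambda>t. bd (c t)) F"
    unfolding bd_def using assms by (intro sdsum_sdsum) auto
  also have "\<dots> = sdsum (\<lambda>t. sym_diff {t} (sdsum c (facets t))) F"
    using cone_eq by (rule sdsum_cong)
  also have "\<dots> = sym_diff F (sdsum (\<lambda>t. sdsum c (facets t)) F)"
    using assms by (simp add: sdsum_sym_diff_fun sdsum_singletons)
  also have "sdsum (\<lambda>t. sdsum c (facets t)) F = sdsum c (bd F)"
    unfolding bd_def using assms by (intro sdsum_sdsum[symmetric]) (auto simp: facets_def)
  finally show ?thesis .
qed

lemma boundary_if_card_less_Sys:
  assumes "B \<in> Zk X k" "enat (card B) < Sys X k"
  shows "B \<in> Bk X k"
proof (rule ccontr)
  assume "B \<notin> Bk X k"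
  then have "Sys X k \<le> enat (card B)"
    using assms(1) unfolding Sys_def by (intro INF_lower) auto
  with assms(2) show False
    by simp
qed

lemma FillB_attained:
  assumes "B \<in> Bk X k"
  obtains A where "A \<subseteq> faces_card X (k+2)" "bd A = B" "enat (card A) = FillB X k B"
proof -
  let ?fillings = "{A. A \<subseteq> faces_card X (k+2) \<and> bd A = B}"
  obtain A0 where "A0 \<in> ?fillings"
    using assms by (auto simp: Bk_def)
  then have "FillB X k B \<in> (\<lambda>A. enat (card A)) ` ?fillings"
    unfolding FillB_def by (rule wellorder_InfI[OF imageI])
  then obtain A where A: "A \<in> ?fillings" "enat (card A) = FillB X k B"
    by auto
  show ?thesis
    by (rule that) (use A in auto)
qed

lemma filling_le_Fill:
  assumes "B \<in> Zk X k" "enat (card B) \<le> M" "M < Sys X k"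
  obtains A where "A \<subseteq> faces_card X (k+2)" "bd A = B" "enat (card A) \<le> Fill X k M"
proof -
  have "B \<in> Bk X k"
    using assms by (intro boundary_if_card_less_Sys) auto
  then obtain A where A: "A \<subseteq> faces_card X (k+2)" "bd A = B" "enat (card A) = FillB X k B"
    by (rule FillB_attained)
  have "FillB X k B \<le> Fill X k M"
    unfolding Fill_def using assms by (intro SUP_upper) auto
  with A that show ?thesis
    by simp
qed

text \<open>The invariant of the construction: c is a cone function on the faces with at most d
vertices, with the volume bound M_{i} on i-faces (recall Mseq X (i+1) = M_{i}).\<close>

definition partial_cone :: "'a set set \<Rightarrow> 'a \<Rightarrow> nat \<Rightarrow> ('a set \<Rightarrow> 'a set set) \<Rightarrow> bool" where
  "partial_cone X v d c \<longleftrightarrow> c {} = {{v}} \<and>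
     (\<forall>t\<in>X. card t \<le> d \<longrightarrow> c t \<subseteq> faces_card X (card t + 1) \<and>
        bd (c t) = sym_diff {t} (sdsum c (facets t)) \<and> enat (card (c t)) \<le> Mseq X (card t))"

locale finite_complex =
  fixes X :: "'a set set"
  assumes simplicial: "simplicial_complex X"
    and finite_X: "finite X"
begin

lemma finite_face:
  assumes "s \<in> X"
  shows "finite s"
proof -
  have "Pow s \<subseteq> X"
    using simplicial assms by (auto simp: simplicial_complex_def)
  then show ?thesis
    using finite_X finite_subset by (metis finite_Pow_iff)
qed

lemma facet_in_complex:
  assumes "s \<in> X" "t \<in> facets s"
  shows "t \<in> X" "card t = card s - 1"
  using assms simplicial finite_face[OF assms(1)] by (auto simp: facets_def simplicial_complex_def)

lemma finite_chain: "A \<subseteq> faces_card X d \<Longrightarrow> finite A"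
  using finite_X by (auto simp: faces_card_def intro: finite_subset)

lemma partial_coneD:
  assumes "partial_cone X v d c" "t \<in> X" "card t \<le> d"
  shows "c t \<subseteq> faces_card X (card t + 1)" "finite (c t)"
    "bd (c t) = sym_diff {t} (sdsum c (facets t))" "enat (card (c t)) \<le> Mseq X (card t)"
  using assms finite_chain unfolding partial_cone_def by auto

lemma partial_cone_base:
  assumes "{v} \<in> X"
  shows "partial_cone X v 0 (\<lambda>_. {{v}})"
  unfolding partial_cone_def
proof (intro conjI ballI impI)
  fix t
  assume "t \<in> X" "card t \<le> 0"
  then have "t = {}"
    using finite_face by auto
  with assms show "{{v}} \<subseteq> faces_card X (card t + 1)"
    "bd {{v}} = sym_diff {t} (sdsum (\<lambda>_. {{v}}) (facets t))" "enat (card {{v}}) \<le> Mseq X (card t)"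
    by (auto simp: faces_card_def bd_def facets_def one_enat_def)
qed simp

lemma cone_cycle_in_Zk:
  assumes c: "partial_cone X v j c" and s: "s \<in> X" "card s = Suc j"
  shows "sym_diff {s} (sdsum c (facets s)) \<in> Zk X j"
proof -
  have facet: "t \<in> X" "card t = j" if "t \<in> facets s" for t
    using facet_in_complex[OF s(1) that] s by auto
  have "sdsum c (facets s) \<subseteq> faces_card X (j+1)"
    using sdsum_subset_UN[of c "facets s"] partial_coneD(1)[OF c] facet by fastforce
  then have in_chains: "sym_diff {s} (sdsum c (facets s)) \<subseteq> faces_card X (j+1)"
    using s by (auto simp: faces_card_def)
  have fin: "finite (facets s)" "finite (sdsum c (facets s))"
    using finite_face[OF s(1)] partial_coneD(2)[OF c] facet
    by (auto simp: facets_def intro!: finite_sdsum)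
  \<comment> \<open>\<open>\<partial>c(\<partial>s) = \<partial>s + c(\<partial>\<partial>s) = \<partial>s\<close>\<close>
  have "bd (sdsum c (facets s)) = facets s"
    using bd_sdsum_cone[of "facets s" c] fin finite_face partial_coneD(2,3)[OF c] facet
    by (simp add: bd_facets)
  then have "bd (sym_diff {s} (sdsum c (facets s))) = {}"
    unfolding bd_def using fin by (simp add: sdsum_sym_diff)
  with in_chains show ?thesis
    by (simp add: Zk_def)
qed

lemma card_cone_cycle_le:
  assumes c: "partial_cone X v j c" and s: "s \<in> X" "card s = Suc j"
  shows "enat (card (sym_diff {s} (sdsum c (facets s)))) \<le> of_nat (j+1) * Mseq X j + 1"
proof -
  have facet: "t \<in> X" "card t = j" if "t \<in> facets s" for t
    using facet_in_complex[OF s(1) that] s by auto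
  have fin: "finite (facets s)" "finite (sdsum c (facets s))"
    using finite_face[OF s(1)] partial_coneD(2)[OF c] facet
    by (auto simp: facets_def intro!: finite_sdsum)
  have "card (sym_diff {s} (sdsum c (facets s))) \<le> Suc (\<Sum>t\<in>facets s. card (c t))"
  proof -
    have "card (sym_diff {s} (sdsum c (facets s))) \<le> card (insert s (sdsum c (facets s)))"
      using fin by (intro card_mono) auto
    also have "\<dots> \<le> Suc (card (sdsum c (facets s)))"
      by (simp add: card_insert_le_m1)
    also have "card (sdsum c (facets s)) \<le> (\<Sum>t\<in>facets s. card (c t))"
      using fin partial_coneD(2)[OF c] facet by (intro card_sdsum_le) auto
    finally show ?thesis
      by simp
  qed
  then have "enat (card (sym_diff {s} (sdsum c (facets s)))) \<le> enat (Suc (\<Sum>t\<in>facets s. card (c t)))"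
    by simp
  also have "\<dots> = (\<Sum>t\<in>facets s. enat (card (c t))) + 1"
    by (simp add: of_nat_eq_enat[symmetric] of_nat_sum)
  also have "(\<Sum>t\<in>facets s. enat (card (c t))) \<le> (\<Sum>t\<in>facets s. Mseq X j)"
    using partial_coneD(4)[OF c] facet by (intro sum_mono) fastforce
  also have "\<dots> = of_nat (card (facets s)) * Mseq X j"
    by simp
  also have "\<dots> \<le> of_nat (j+1) * Mseq X j"
    using card_facets_le[OF finite_face[OF s(1)]] s by (intro mult_right_mono of_nat_mono) simp_all
  finally show ?thesis
    by simp
qed

lemma partial_cone_extend:
  assumes c: "partial_cone X v j c" and sys: "of_nat (j+1) * Mseq X j + 1 < Sys X j"
  obtains c' where "partial_cone X v (Suc j) c'"
proof -
  define filling where "filling s A \<longleftrightarrow> A \<subseteq> faces_card X (Suc j + 1) \<and>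
    bd A = sym_diff {s} (sdsum c (facets s)) \<and> enat (card A) \<le> Mseq X (Suc j)" for s A
  have filling_exists: "\<exists>A. filling s A" if s: "s \<in> X" "card s = Suc j" for s
  proof -
    obtain A where "A \<subseteq> faces_card X (j+2)" "bd A = sym_diff {s} (sdsum c (facets s))"
      "enat (card A) \<le> Fill X j (of_nat (j+1) * Mseq X j + 1)"
      using cone_cycle_in_Zk[OF c s] card_cone_cycle_le[OF c s] sys by (rule filling_le_Fill)
    then show ?thesis
      by (auto simp: filling_def)
  qed
  define c' where "c' s = (if s \<in> X \<and> card s = Suc j then SOME A. filling s A else c s)" for s
  have filling_c': "filling s (c' s)" if "s \<in> X" "card s = Suc j" for s
    using someI_ex[OF filling_exists[OF that]] that by (simp add: c'_def)
  have sdsum_facets_c': "sdsum c' (facets t) = sdsum c (facets t)"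
    if "t \<in> X" "card t \<le> Suc j" for t
  proof (rule sdsum_cong)
    fix r
    assume "r \<in> facets t"
    then have "card r = card t - 1" "t \<noteq> {}"
      using facet_in_complex[OF that(1)] by (auto simp: facets_def)
    then show "c' r = c r"
      using finite_face[OF that(1)] that(2) by (auto simp: c'_def)
  qed
  have "partial_cone X v (Suc j) c'"
    unfolding partial_cone_def
  proof (intro conjI ballI impI)
    show "c' {} = {{v}}"
      using c by (simp add: c'_def partial_cone_def)
  next
    fix t
    assume t: "t \<in> X" "card t \<le> Suc j"
    have "c' t \<subseteq> faces_card X (card t + 1) \<and> bd (c' t) = sym_diff {t} (sdsum c (facets t)) \<and>
      enat (card (c' t)) \<le> Mseq X (card t)"
    proof (cases "card t = Suc j")
      case True
      then show ?thesis
        using filling_c'[OF t(1) True] by (simp add: filling_def)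
    next
      case False
      then show ?thesis
        using partial_coneD[OF c t(1)] t by (simp add: c'_def)
    qed
    then show "c' t \<subseteq> faces_card X (card t + 1)" "bd (c' t) = sym_diff {t} (sdsum c' (facets t))"
      "enat (card (c' t)) \<le> Mseq X (card t)"
      by (simp_all add: sdsum_facets_c'[OF t])
  qed
  then show ?thesis
    by (rule that)
qed

lemma partial_cone_exists:
  assumes "{v} \<in> X" "\<And>j. j < d \<Longrightarrow> of_nat (j+1) * Mseq X j + 1 < Sys X j"
  obtains c where "partial_cone X v d c"
  using assms(2)
proof (induction d arbitrary: thesis)
  case 0
  then show ?case
    using partial_cone_base[OF assms(1)] by blast
next
  case (Suc j)
  obtain c where "partial_cone X v j c"
    using Suc.IH Suc.prems(2) by auto
  then show ?case
    using Suc.prems by (auto intro: partial_cone_extend)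
qed

lemma cone_function_if_partial_cone:
  assumes c: "partial_cone X v (Suc k) c" and "{v} \<in> X"
  shows "cone_function X k v c"
  unfolding cone_function_def
proof (intro conjI allI impI ballI)
  show "c {} = {{v}}"
    using c by (simp add: partial_cone_def)
next
  fix d s
  assume "d \<le> k + 1" "s \<in> faces_card X d"
  then show "c s \<subseteq> faces_card X (d + 1)"
    using partial_coneD(1)[OF c] by (auto simp: faces_card_def)
next
  fix j A
  assume j: "j \<le> k" and A: "A \<subseteq> faces_card X (j + 1)"
  then have "bd (sdsum c A) = sym_diff A (sdsum c (bd A))"
    using finite_chain finite_face partial_coneD(2,3)[OF c]
    by (intro bd_sdsum_cone) (auto simp: faces_card_def)
  then show "bd (sdsum c A) = A \<union> sdsum c (bd A) - A \<inter> sdsum c (bd A)"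
    by blast
qed fact

lemma Crad_le_Mseq:
  assumes "{v} \<in> X" "\<And>j. j \<le> k \<Longrightarrow> of_nat (j+1) * Mseq X j + 1 < Sys X j"
  shows "Crad X k \<le> Mseq X (Suc k)"
proof -
  have "of_nat (j+1) * Mseq X j + 1 < Sys X j" if "j < Suc k" for j
    using assms(2) that by simp
  then obtain c where c: "partial_cone X v (Suc k) c"
    by (rule partial_cone_exists[OF assms(1)])
  have "Crad X k \<le> Vol X k c"
    unfolding Crad_def using cone_function_if_partial_cone[OF c assms(1)]
    by (intro INF_lower2[of "(v, c)"]) auto
  also have "\<dots> \<le> Mseq X (Suc k)"
    unfolding Vol_def using partial_coneD(4)[OF c] by (intro SUP_least) (force simp: faces_card_def simp del: Mseq.simps)
  finally show ?thesis .
qed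

end

lemma pure_complex_finite_complex: "pure_complex X n \<Longrightarrow> finite_complex X"
  by (simp add: pure_complex_def finite_complex_def)

theorem proposition4p1:
  fixes X :: "'a set set" and n k :: nat
  assumes "pure_complex X n"
    and "k \<le> n - 1" and "n \<ge> 1"
    and "\<forall>j\<le>k. Sys X j > of_nat (j+1) * Mseq X j + 1"
  shows "Crad X k \<le> Mseq X (Suc k)"
proof -
  interpret finite_complex X
    using assms(1) by (rule pure_complex_finite_complex)
  obtain \<sigma> where "\<sigma> \<in> X" "card \<sigma> = n + 1"
    using assms(1) simplicial by (auto simp: pure_complex_def simplicial_complex_def)
  then obtain v where "v \<in> \<sigma>"
    by fastforce
  with \<open>\<sigma> \<in> X\<close> have "{v} \<in> X"
    using simplicial by (auto simp: simplicial_complex_def)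
  with assms(4) show ?thesis
    by (intro Crad_le_Mseq) auto
qed

end
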